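(* Let $q$ be a prime power, $\eta\ge1$ an integer, $\delta_T<0$ and $\delta_X>0$ integers. Let $C^\star_\eta(\delta_T,\delta_X)$ be the code obtained from $C_\eta(\delta_T,\delta_X)$ by puncturing at the $q+1$ coordinates corresponding to the $\mathbb{F}_q$-rational points of $\mathcal{H}_\eta$ with $x_1=0$ (the points with representatives $(1,a,0,1)$, $a\in\mathbb{F}_q$, and $(0,1,0,1)$). Then $C^\star_\eta(\delta_T,\delta_X)$ has length $q(q+1)$ and has the same dimension and the same minimum distance as $C_\eta(\delta_T,\delta_X)$.
   Context: $R=\mathbb{F}_q[T_1,T_2,X_1,X_2]$; the bidegree of $T_1^{c_1}T_2^{c_2}X_1^{d_1}X_2^{d_2}$ is $(c_1+c_2-\eta d_1,d_1+d_2)$; $R(\delta_T,\delta_X)$ is the span of monomials of that bidegree. The Hirzebruch surface $\mathcal{H}_\eta$ is the quotient of $(\mathbb{A}^2\setminus\{0\})^2$ by $\mathbb{G}_m^2$ acting by $(\lambda,\mu)\cdot(t_1,t_2,x_1,x_2)=(\lambda t_1,\lambda t_2,\mu\lambda^{-\eta}x_1,\mu x_2)$; each of its $(q+1)^2$ $\mathbb{F}_q$-points has a unique representative $(1,a,1,b)$, $(0,1,1,b)$, $(1,a,0,1)$ or $(0,1,0,1)$ ($a,b\in\mathbb{F}_q$), where polynomials are evaluated. $C_\eta(\delta_T,\delta_X)\subset\mathbb{F}_q^{(q+1)^2}$ is the image of $F\mapsto(F(P))_{P\in\mathcal{H}_\eta(\mathbb{F}_q)}$ on $R(\delta_T,\delta_X)$.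 *)

theory Defs
  imports Complex_Main "HOL-Library.Function_Algebras"
begin

type_synonym 'a pt = "'a \<times> 'a \<times> 'a \<times> 'a"
type_synonym expo = "nat \<times> nat \<times> nat \<times> nat"

definition wscale :: "'a::field \<Rightarrow> ('b \<Rightarrow> 'a) \<Rightarrow> ('b \<Rightarrow> 'a)" where
  "wscale c w = (\<lambda>x. c * w x)"

text \<open>Chosen representatives (t1,t2,x1,x2) of the rational points of the Hirzebruch surface.\<close>
definition hirz_points :: "('a::field) pt set" where
  "hirz_points =
     {(1, a, 1, b) | a b. True} \<union> {(0, 1, 1, b) | b. True} \<union>
     {(1, a, 0, 1) | a. True} \<union> {(0, 1, 0, 1)}"

definition hirz_x1_zero :: "('a::field) pt set" where
  "hirz_x1_zero = {(1, a, 0, 1) | a. True} \<union> {(0, 1, 0, 1)}"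

text \<open>Exponent vectors (c1,c2,d1,d2) of monomials T1^c1 T2^c2 X1^d1 X2^d2 of bidegree (dT,dX).\<close>
definition bidegree_monos :: "nat \<Rightarrow> int \<Rightarrow> int \<Rightarrow> expo set" where
  "bidegree_monos \<eta> dT dX =
     {(c1, c2, d1, d2). int c1 + int c2 - int \<eta> * int d1 = dT \<and> int d1 + int d2 = dX}"

fun mono_eval :: "expo \<Rightarrow> ('a::field) pt \<Rightarrow> 'a" where
  "mono_eval (c1, c2, d1, d2) (t1, t2, x1, x2) = t1 ^ c1 * t2 ^ c2 * x1 ^ d1 * x2 ^ d2"

definition poly_eval :: "nat \<Rightarrow> int \<Rightarrow> int \<Rightarrow> (expo \<Rightarrow> 'a::field) \<Rightarrow> 'a pt \<Rightarrow> 'a" where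
  "poly_eval \<eta> dT dX coeff P = (\<Sum>m\<in>bidegree_monos \<eta> dT dX. coeff m * mono_eval m P)"

text \<open>The code C_eta(dT,dX): words are functions on the coordinate set hirz_points,
  extended by 0 outside.\<close>
definition hirz_code :: "nat \<Rightarrow> int \<Rightarrow> int \<Rightarrow> ('a::field pt \<Rightarrow> 'a) set" where
  "hirz_code \<eta> dT dX =
     {(\<lambda>P. if P \<in> hirz_points then poly_eval \<eta> dT dX coeff P else 0) | coeff. True}"

definition puncture :: "'b set \<Rightarrow> ('b \<Rightarrow> 'a::zero) set \<Rightarrow> ('b \<Rightarrow> 'a) set" where
  "puncture Z C = {(\<lambda>P. if P \<in> Z then 0 else w P) | w. w \<in> C}"

definition hamming_weight :: "'b set \<Rightarrow> ('b \<Rightarrow> 'a::zero) \<Rightarrow> nat" where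
  "hamming_weight S w = card {P \<in> S. w P \<noteq> 0}"

definition min_distance :: "'b set \<Rightarrow> ('b \<Rightarrow> 'a::zero) set \<Rightarrow> nat" where
  "min_distance S C = Min {hamming_weight S w | w. w \<in> C \<and> w \<noteq> (\<lambda>_. 0)}"

definition code_dim :: "('b \<Rightarrow> 'a::field) set \<Rightarrow> nat" where
  "code_dim C = vector_space.dim wscale C"

end

theory Submission
  imports Defs
begin

text \<open>Since \<open>\<delta>\<^sub>T < 0\<close>, a monomial of bidegree \<open>(\<delta>\<^sub>T, \<delta>\<^sub>X)\<close> satisfies
  \<open>\<eta> d\<^sub>1 = c\<^sub>1 + c\<^sub>2 - \<delta>\<^sub>T > 0\<close>, so it is divisible by \<open>X\<^sub>1\<close>. Hence every codeword vanishes
  at the \<open>q + 1\<close> points with \<open>x\<^sub>1 = 0\<close>: puncturing there only deletes zero coordinates,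
  which changes neither the code nor any Hamming weight.\<close>

lemma mono_eval_x1_zero:
  assumes "dT < 0" and "m \<in> bidegree_monos \<eta> dT dX"
  shows "mono_eval m (t1, t2, 0 :: 'a::field, x2) = 0"
proof -
  obtain c1 c2 d1 d2 where m: "m = (c1, c2, d1, d2)" by (cases m) auto
  with assms have "int \<eta> * int d1 > 0" unfolding bidegree_monos_def by auto
  then have "d1 \<noteq> 0" by (cases "d1 = 0") auto
  then show ?thesis using m by simp
qed

lemma hirz_code_vanishes_x1_zero:
  assumes "dT < 0" and "w \<in> hirz_code \<eta> dT dX" and "P \<in> (hirz_x1_zero :: 'a::field pt set)"
  shows "w P = 0"
proof -
  obtain coeff where w: "w = (\<lambda>P. if P \<in> hirz_points then poly_eval \<eta> dT dX coeff P else 0)"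
    using assms(2) unfolding hirz_code_def by auto
  obtain t1 t2 x2 where P: "P = (t1, t2, 0, x2)"
    using assms(3) unfolding hirz_x1_zero_def by auto
  have "poly_eval \<eta> dT dX coeff P = 0"
    unfolding poly_eval_def P by (simp add: mono_eval_x1_zero[OF assms(1)])
  then show ?thesis using w by simp
qed

lemma puncture_eq_self:
  assumes "\<And>w P. w \<in> C \<Longrightarrow> P \<in> Z \<Longrightarrow> w P = 0"
  shows "puncture Z C = C"
proof -
  have "puncture Z C = (\<lambda>w P. if P \<in> Z then 0 else w P) ` C"
    unfolding puncture_def by blast
  also have "\<dots> = id ` C"
    using assms by (intro image_cong) auto
  finally show ?thesis by simp
qed

lemma hamming_weight_Diff:
  assumes "\<And>P. P \<in> Z \<Longrightarrow> w P = 0"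
  shows "hamming_weight (S - Z) w = hamming_weight S w"
proof -
  have "{P \<in> S - Z. w P \<noteq> 0} = {P \<in> S. w P \<noteq> 0}" using assms by auto
  then show ?thesis unfolding hamming_weight_def by simp
qed

lemma min_distance_Diff:
  assumes "\<And>w P. w \<in> C \<Longrightarrow> P \<in> Z \<Longrightarrow> w P = 0"
  shows "min_distance (S - Z) C = min_distance S C"
proof -
  have "{hamming_weight (S - Z) w | w. w \<in> C \<and> w \<noteq> (\<lambda>_. 0)}
      = {hamming_weight S w | w. w \<in> C \<and> w \<noteq> (\<lambda>_. 0)}"
    using hamming_weight_Diff[of Z] assms by metis
  then show ?thesis unfolding min_distance_def by simp
qed

lemma hirz_points_Diff_x1_zero:
  "(hirz_points - hirz_x1_zero :: 'a::field pt set)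
     = range (\<lambda>(a, b). (1, a, 1, b)) \<union> range (\<lambda>b. (0, 1, 1, b))"
proof (rule set_eqI)
  fix P :: "'a pt"
  obtain t1 t2 x1 x2 where P: "P = (t1, t2, x1, x2)" by (cases P) auto
  show "P \<in> hirz_points - hirz_x1_zero
    \<longleftrightarrow> P \<in> range (\<lambda>(a, b). (1, a, 1, b)) \<union> range (\<lambda>b. (0, 1, 1, b))"
    unfolding P hirz_points_def hirz_x1_zero_def by (cases "x1 = 0") auto
qed

lemma card_hirz_points_Diff_x1_zero:
  "card (hirz_points - hirz_x1_zero :: 'a::{finite,field} pt set)
     = card (UNIV :: 'a set) * (card (UNIV :: 'a set) + 1)"
proof -
  let ?t1_one = "range (\<lambda>(a, b). (1, a, 1, b)) :: 'a pt set"
  let ?t1_zero = "range (\<lambda>b. (0, 1, 1, b)) :: 'a pt set"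
  have "card ?t1_one = card (UNIV :: ('a \<times> 'a) set)"
    by (subst card_image) (auto simp: inj_on_def)
  moreover have "card ?t1_zero = card (UNIV :: 'a set)"
    by (subst card_image) (auto simp: inj_on_def)
  moreover have "?t1_one \<inter> ?t1_zero = {}"
    by auto
  ultimately show ?thesis
    unfolding hirz_points_Diff_x1_zero
    by (simp add: card_Un_disjoint algebra_simps
      card_cartesian_product[of UNIV UNIV, unfolded UNIV_Times_UNIV])
qed

theorem theorem6p1:
  fixes \<eta> :: nat and dT dX :: int
  assumes "\<eta> \<ge> 1" and "dT < 0" and "dX > 0"
  defines "C \<equiv> (hirz_code \<eta> dT dX :: ('a::{finite,field} pt \<Rightarrow> 'a) set)"
  defines "q \<equiv> card (UNIV :: 'a set)"
  defines "Cstar \<equiv> puncture (hirz_x1_zero :: 'a pt set) C"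
  defines "Sstar \<equiv> (hirz_points - hirz_x1_zero :: 'a pt set)"
  shows "card Sstar = q * (q + 1)
       \<and> code_dim Cstar = code_dim C
       \<and> min_distance Sstar Cstar = min_distance (hirz_points :: 'a pt set) C"
proof -
  have vanish: "\<And>w P. w \<in> C \<Longrightarrow> P \<in> hirz_x1_zero \<Longrightarrow> w P = 0"
    unfolding C_def using hirz_code_vanishes_x1_zero[OF assms(2)] by blast
  then have "Cstar = C" unfolding Cstar_def by (rule puncture_eq_self)
  moreover have "min_distance Sstar C = min_distance hirz_points C"
    unfolding Sstar_def using vanish by (rule min_distance_Diff)
  ultimately show ?thesis
    using card_hirz_points_Diff_x1_zero unfolding Sstar_def q_def by simp
qed

end
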